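(* Let $L$ be a multiplicative lattice. (1) If $\{p_\lambda\}_{\lambda\in\Lambda}$ is a family of prime elements of $L$, then $\bigwedge_{\lambda\in\Lambda}p_\lambda$ is a quasi $m$-absorbing element of $L$ for all $m\ge2$. (2) If $\{p_\lambda\}_{\lambda\in\Lambda}$ is a family of weakly prime elements of $L$, then $\bigwedge_{\lambda\in\Lambda}p_\lambda$ is a weakly quasi $m$-absorbing element of $L$ for all $m\ge2$.
   Context: A multiplicative lattice is a complete lattice $L$ with least element $0$ and compact greatest element $1$, equipped with a commutative, associative product that distributes over arbitrary joins and has $1$ as multiplicative identity. An element $a$ is compact if $a\le\bigvee_{\alpha\in I}a_\alpha$ implies $a\le\bigvee_{\alpha\in I_0}a_\alpha$ for some finite $I_0\subseteq I$; $L_*$ denotes the set of compact elements. A proper element $p$ ($p<1$) is prime (resp. weakly prime) if for $a,b\in L$, $ab\le p$ (resp. $0\ne ab\le p$) implies $a\le p$ or $b\le p$. A proper element $q$ is quasi $m$-absorbing if whenever $a^mb\le q$ for some $a,b\in L_*$, then $a^m\le q$ or $a^{m-1}b\le q$; it is weakly quasi $m$-absorbing if whenever $0\ne a^mb\le q$ for some $a,b\in L_*$, then $a^m\le q$ or $a^{m-1}b\le q$. *)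

theory Defs
  imports Main
begin

definition compact_el :: "'a::complete_lattice \<Rightarrow> bool" where
  "compact_el a \<longleftrightarrow> (\<forall>S. a \<le> Sup S \<longrightarrow> (\<exists>T. finite T \<and> T \<subseteq> S \<and> a \<le> Sup T))"

text \<open>Multiplicative lattice: complete lattice (0 = bot, 1 = top) with compact top and a
commutative, associative product distributing over arbitrary joins, with top as unit.\<close>
locale mult_lattice =
  fixes mult :: "'a::complete_lattice \<Rightarrow> 'a \<Rightarrow> 'a"
  assumes mult_comm: "mult a b = mult b a"
    and mult_assoc: "mult (mult a b) c = mult a (mult b c)"
    and mult_Sup_distrib: "mult a (Sup S) = Sup (mult a ` S)"
    and mult_top: "mult top a = a"
    and top_compact: "compact_el (top::'a)"

primrec mpow :: "('a::complete_lattice \<Rightarrow> 'a \<Rightarrow> 'a) \<Rightarrow> 'a \<Rightarrow> nat \<Rightarrow> 'a" where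
  "mpow mult a 0 = top"
| "mpow mult a (Suc n) = mult a (mpow mult a n)"

definition prime_el :: "('a::complete_lattice \<Rightarrow> 'a \<Rightarrow> 'a) \<Rightarrow> 'a \<Rightarrow> bool" where
  "prime_el mult p \<longleftrightarrow> p < top \<and>
     (\<forall>a b. mult a b \<le> p \<longrightarrow> a \<le> p \<or> b \<le> p)"

definition weakly_prime_el :: "('a::complete_lattice \<Rightarrow> 'a \<Rightarrow> 'a) \<Rightarrow> 'a \<Rightarrow> bool" where
  "weakly_prime_el mult p \<longleftrightarrow> p < top \<and>
     (\<forall>a b. mult a b \<noteq> bot \<longrightarrow> mult a b \<le> p \<longrightarrow> a \<le> p \<or> b \<le> p)"

definition quasi_m_absorbing :: "('a::complete_lattice \<Rightarrow> 'a \<Rightarrow> 'a) \<Rightarrow> nat \<Rightarrow> 'a \<Rightarrow> bool" where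
  "quasi_m_absorbing mult m q \<longleftrightarrow> q < top \<and>
     (\<forall>a b. compact_el a \<longrightarrow> compact_el b \<longrightarrow> mult (mpow mult a m) b \<le> q \<longrightarrow>
        mpow mult a m \<le> q \<or> mult (mpow mult a (m - 1)) b \<le> q)"

definition weakly_quasi_m_absorbing :: "('a::complete_lattice \<Rightarrow> 'a \<Rightarrow> 'a) \<Rightarrow> nat \<Rightarrow> 'a \<Rightarrow> bool" where
  "weakly_quasi_m_absorbing mult m q \<longleftrightarrow> q < top \<and>
     (\<forall>a b. compact_el a \<longrightarrow> compact_el b \<longrightarrow> mult (mpow mult a m) b \<noteq> bot \<longrightarrow>
        mult (mpow mult a m) b \<le> q \<longrightarrow>
        mpow mult a m \<le> q \<or> mult (mpow mult a (m - 1)) b \<le> q)"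

end

theory Submission
  imports Defs
begin

text \<open>For \<open>m \<ge> 2\<close> we have \<open>a^m b = a (a^(m-1) b)\<close> and \<open>a^(m-1) b \<le> a\<close>. If \<open>p\<close> is
  (weakly) prime and \<open>a^m b \<le> p\<close>, then \<open>a \<le> p\<close> or \<open>a^(m-1) b \<le> p\<close>, and in both cases
  \<open>a^(m-1) b \<le> p\<close>. So \<open>a^(m-1) b\<close> lies below every \<open>p\<^sub>\<lambda>\<close>, hence below their meet:
  the second alternative of the absorbing condition always holds, even without compactness.\<close>

context mult_lattice
begin

lemma mult_mono_right: "x \<le> y \<Longrightarrow> mult a x \<le> mult a y"
proof -
  assume "x \<le> y"
  then have "mult a y = Sup (mult a ` {x, y})"
    using mult_Sup_distrib[of a "{x, y}"] by (simp add: sup_absorb2)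
  then show ?thesis by (simp add: sup.absorb_iff2)
qed

lemma mult_le_left: "mult a x \<le> a"
proof -
  have "mult a x \<le> mult a top" by (rule mult_mono_right) simp
  also have "\<dots> = a" using mult_comm mult_top by metis
  finally show ?thesis .
qed

lemma mult_mpow_eq:
  assumes "m \<ge> 2"
  shows "mult (mpow mult a m) b = mult a (mult (mpow mult a (m - 1)) b)"
  using assms by (cases m) (simp_all add: mult_assoc)

lemma mult_mpow_le_base:
  assumes "m \<ge> 2"
  shows "mult (mpow mult a (m - 1)) b \<le> a"
proof -
  obtain k where m: "m = Suc (Suc k)" using assms by (metis add_2_eq_Suc le_Suc_ex)
  have "mult (mpow mult a (m - 1)) b \<le> mpow mult a (m - 1)" by (rule mult_le_left)
  also have "\<dots> \<le> a" using m by (simp add: mult_le_left)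
  finally show ?thesis .
qed

lemma prime_el_le_of_mult_le:
  assumes "prime_el mult p" and "x \<le> a" and "mult a x \<le> p"
  shows "x \<le> p"
  using assms unfolding prime_el_def by (meson order_trans)

lemma weakly_prime_el_le_of_mult_le:
  assumes "weakly_prime_el mult p" and "x \<le> a" and "mult a x \<le> p" and "mult a x \<noteq> bot"
  shows "x \<le> p"
  using assms unfolding weakly_prime_el_def by (meson order_trans)

lemma INF_prime_quasi_m_absorbing:
  assumes "Lam \<noteq> {}" and prime: "\<forall>l\<in>Lam. prime_el mult (p l)" and "m \<ge> 2"
  shows "quasi_m_absorbing mult m (INF l\<in>Lam. p l)"
  unfolding quasi_m_absorbing_def
proof (intro conjI allI impI)
  from \<open>Lam \<noteq> {}\<close> obtain l0 where "l0 \<in> Lam" by blast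
  with prime show "(INF l\<in>Lam. p l) < top"
    unfolding prime_el_def by (meson INF_lower le_less_trans)
  fix a b
  assume le: "mult (mpow mult a m) b \<le> (INF l\<in>Lam. p l)"
  have "mult (mpow mult a (m - 1)) b \<le> p l" if "l \<in> Lam" for l
  proof (rule prime_el_le_of_mult_le)
    show "prime_el mult (p l)" using prime that by blast
    show "mult (mpow mult a (m - 1)) b \<le> a" using \<open>m \<ge> 2\<close> by (rule mult_mpow_le_base)
    have "mult a (mult (mpow mult a (m - 1)) b) = mult (mpow mult a m) b"
      using \<open>m \<ge> 2\<close> by (rule mult_mpow_eq[symmetric])
    also have "\<dots> \<le> (INF l\<in>Lam. p l)" by (rule le)
    also have "\<dots> \<le> p l" using that by (rule INF_lower)
    finally show "mult a (mult (mpow mult a (m - 1)) b) \<le> p l" .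
  qed
  then show "mpow mult a m \<le> (INF l\<in>Lam. p l) \<or> mult (mpow mult a (m - 1)) b \<le> (INF l\<in>Lam. p l)"
    by (simp add: le_INF_iff)
qed

lemma INF_weakly_prime_weakly_quasi_m_absorbing:
  assumes "Lam \<noteq> {}" and prime: "\<forall>l\<in>Lam. weakly_prime_el mult (p l)" and "m \<ge> 2"
  shows "weakly_quasi_m_absorbing mult m (INF l\<in>Lam. p l)"
  unfolding weakly_quasi_m_absorbing_def
proof (intro conjI allI impI)
  from \<open>Lam \<noteq> {}\<close> obtain l0 where "l0 \<in> Lam" by blast
  with prime show "(INF l\<in>Lam. p l) < top"
    unfolding weakly_prime_el_def by (meson INF_lower le_less_trans)
  fix a b
  assume nonzero: "mult (mpow mult a m) b \<noteq> bot"
    and le: "mult (mpow mult a m) b \<le> (INF l\<in>Lam. p l)"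
  have "mult (mpow mult a (m - 1)) b \<le> p l" if "l \<in> Lam" for l
  proof (rule weakly_prime_el_le_of_mult_le)
    show "weakly_prime_el mult (p l)" using prime that by blast
    show "mult (mpow mult a (m - 1)) b \<le> a" using \<open>m \<ge> 2\<close> by (rule mult_mpow_le_base)
    have "mult a (mult (mpow mult a (m - 1)) b) = mult (mpow mult a m) b"
      using \<open>m \<ge> 2\<close> by (rule mult_mpow_eq[symmetric])
    also have "\<dots> \<le> (INF l\<in>Lam. p l)" by (rule le)
    also have "\<dots> \<le> p l" using that by (rule INF_lower)
    finally show "mult a (mult (mpow mult a (m - 1)) b) \<le> p l" .
    show "mult a (mult (mpow mult a (m - 1)) b) \<noteq> bot"
      using nonzero mult_mpow_eq[OF \<open>m \<ge> 2\<close>] by simp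
  qed
  then show "mpow mult a m \<le> (INF l\<in>Lam. p l) \<or> mult (mpow mult a (m - 1)) b \<le> (INF l\<in>Lam. p l)"
    by (simp add: le_INF_iff)
qed

end

theorem mainTheorem5:
  fixes mult :: "'a::complete_lattice \<Rightarrow> 'a \<Rightarrow> 'a"
    and p :: "'i \<Rightarrow> 'a" and Lam :: "'i set"
  assumes "mult_lattice mult"
    and "Lam \<noteq> {}"
  shows "((\<forall>l\<in>Lam. prime_el mult (p l)) \<longrightarrow>
            (\<forall>m::nat. m \<ge> 2 \<longrightarrow> quasi_m_absorbing mult m (INF l\<in>Lam. p l)))
       \<and> ((\<forall>l\<in>Lam. weakly_prime_el mult (p l)) \<longrightarrow>
            (\<forall>m::nat. m \<ge> 2 \<longrightarrow> weakly_quasi_m_absorbing mult m (INF l\<in>Lam. p l)))"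
proof -
  interpret mult_lattice mult by fact
  show ?thesis
    using INF_prime_quasi_m_absorbing[OF assms(2)]
      INF_weakly_prime_weakly_quasi_m_absorbing[OF assms(2)] by blast
qed

end
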